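(* Let $\mathcal{X}$ and $\mathcal{Y}$ be infinite-dimensional Banach spaces with Schauder bases $\{x_n\}_{n\ge1}$ and $\{y_n\}_{n\ge1}$, and let $\mathcal{F}$ be a universal approximator. For every continuous (non-linear) operator $f:\mathcal{X}\to\mathcal{Y}$, every $\varepsilon>0$ and every compact $K\subseteq\mathcal{X}$ there exist $n,N,\tilde Q\in\mathbb{N}_+$, $\hat f\in\bigcup_c\mathcal{F}_{n,N,c}$ and real numbers $\tilde z_{j,i}$ ($j\le N$, $i\le\tilde Q$) such that $$\hat t(x)=\sum_{j=1}^N\sum_{i=1}^{\tilde Q}\Big[P_{\Delta_N}\circ\hat f\big((\beta^x_k)_{k=1}^n\big)\Big]_j\,\tilde z_{j,i}\,y_i$$ satisfies $\sup_{x\in K}\|f(x)-\hat t(x)\|_{\mathcal{Y}}<\varepsilon$, where $x=\sum_k\beta^x_kx_k$ is the Schauder expansion of $x$.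
   Context: $P_{\Delta_N}$ is the Euclidean orthogonal projection of $\mathbb{R}^N$ onto the simplex $\Delta_N$. A universal approximator is a family $\mathcal{F}=\{\mathcal{F}_{n,m,c}\}$ of sets of maps $\mathbb{R}^n\to\mathbb{R}^m$, nested in $c$, with a rate function $r(\omega,K,n,m,c)$ decreasing to $0$ in $c$, such that every uniformly continuous $f:\mathbb{R}^n\to\mathbb{R}^m$ with continuous modulus $\omega$ is approximated on every compact $K$ within $r(\omega,K,n,m,c)$ by some element of $\mathcal{F}_{n,m,c}$. *)

theory Defs
  imports "HOL-Analysis.Analysis"
begin

(* Schauder basis (indexed from 0: e 0 is the paper's x_1): every vector has a
   unique expansion v = sum_k beta_k e_k converging in norm. *)
definition schauder_basis :: "(nat \<Rightarrow> 'a::real_normed_vector) \<Rightarrow> bool" where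
  "schauder_basis e \<longleftrightarrow>
     (\<forall>v. \<exists>!\<beta>::nat \<Rightarrow> real. (\<lambda>n. \<Sum>k<n. \<beta> k *\<^sub>R e k) \<longlonglongrightarrow> v)"

definition schauder_coeff :: "(nat \<Rightarrow> 'a::real_normed_vector) \<Rightarrow> 'a \<Rightarrow> nat \<Rightarrow> real" where
  "schauder_coeff e v = (THE \<beta>. (\<lambda>n. \<Sum>k<n. \<beta> k *\<^sub>R e k) \<longlonglongrightarrow> v)"

definition infinite_dimensional :: "'a::real_vector itself \<Rightarrow> bool" where
  "infinite_dimensional _ \<longleftrightarrow> \<not> (\<exists>S::'a set. finite S \<and> span S = UNIV)"

(* R^n is represented as the functions nat => real vanishing from index n on
   (coordinate i < n is the paper's coordinate i+1). *)
definition vecs :: "nat \<Rightarrow> (nat \<Rightarrow> real) set" where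
  "vecs n = {x. \<forall>i\<ge>n. x i = 0}"

definition vnorm :: "nat \<Rightarrow> (nat \<Rightarrow> real) \<Rightarrow> real" where
  "vnorm n x = sqrt (\<Sum>i<n. (x i)\<^sup>2)"

definition prob_simplex :: "nat \<Rightarrow> (nat \<Rightarrow> real) set" where
  "prob_simplex N = {p \<in> vecs N. (\<forall>i<N. 0 \<le> p i) \<and> (\<Sum>i<N. p i) = 1}"

definition proj_simplex :: "nat \<Rightarrow> (nat \<Rightarrow> real) \<Rightarrow> (nat \<Rightarrow> real)" where
  "proj_simplex N v = (THE p. p \<in> prob_simplex N \<and>
      (\<forall>q\<in>prob_simplex N. vnorm N (\<lambda>i. v i - p i) \<le> vnorm N (\<lambda>i. v i - q i)))"

definition is_modulus :: "(real \<Rightarrow> real) \<Rightarrow> bool" where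
  "is_modulus \<omega> \<longleftrightarrow> continuous_on {0..} \<omega> \<and> \<omega> 0 = 0 \<and> mono_on {0..} \<omega> \<and>
     (\<forall>t\<ge>0. 0 \<le> \<omega> t)"

definition has_modulus :: "nat \<Rightarrow> nat \<Rightarrow> (real \<Rightarrow> real) \<Rightarrow> ((nat \<Rightarrow> real) \<Rightarrow> (nat \<Rightarrow> real)) \<Rightarrow> bool" where
  "has_modulus n m \<omega> f \<longleftrightarrow> f ` vecs n \<subseteq> vecs m \<and>
     (\<forall>x\<in>vecs n. \<forall>y\<in>vecs n. vnorm m (\<lambda>i. f x i - f y i) \<le> \<omega> (vnorm n (\<lambda>i. x i - y i)))"

definition universal_approximator ::
  "(nat \<Rightarrow> nat \<Rightarrow> nat \<Rightarrow> ((nat \<Rightarrow> real) \<Rightarrow> (nat \<Rightarrow> real)) set) \<Rightarrow>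
   ((real \<Rightarrow> real) \<Rightarrow> (nat \<Rightarrow> real) set \<Rightarrow> nat \<Rightarrow> nat \<Rightarrow> nat \<Rightarrow> real) \<Rightarrow> bool" where
  "universal_approximator F r \<longleftrightarrow>
     (\<forall>n m c. \<forall>g\<in>F n m c. g ` vecs n \<subseteq> vecs m) \<and>
     (\<forall>n m c c'. c \<le> c' \<longrightarrow> F n m c \<subseteq> F n m c') \<and>
     (\<forall>\<omega> K n m. antimono (\<lambda>c. r \<omega> K n m c) \<and> (\<lambda>c. r \<omega> K n m c) \<longlonglongrightarrow> 0) \<and>
     (\<forall>n m f \<omega> K c. is_modulus \<omega> \<and> has_modulus n m \<omega> f \<and> compact K \<and> K \<subseteq> vecs n \<longrightarrow>
        (\<exists>g\<in>F n m c. \<forall>x\<in>K. vnorm m (\<lambda>i. f x i - g x i) \<le> r \<omega> K n m c))"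

end

theory Submission
  imports Defs
begin

(* The partial-sum projections of a Schauder basis are uniformly bounded (a Baire category
   argument), so the coefficient functionals are continuous and the partial sums converge
   uniformly on compact sets. Hence for large n, points of K whose first n coefficients are
   close are close in X, and K has a finite net c_1, ..., c_N in these coordinates. A Lipschitz
   partition of unity made of tents around the coordinates of the c_j maps the coordinates of
   points of K into the simplex; the universal approximator approximates it uniformly, and
   projecting onto the simplex at most doubles the error. The convex combination of truncated
   expansions of the f(c_j) with these weights is the required double sum, and it is close to
   f(x) because only centres near x carry weight. *)

section \<open>Euclidean norm and projection onto the simplex\<close>

lemma vnorm_eq_L2_set: "vnorm n x = L2_set x {..<n}"
  by (simp add: vnorm_def L2_set_def)

lemma vnorm_nonneg: "0 \<le> vnorm n x"
  by (simp add: vnorm_def sum_nonneg)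

lemma vnorm_triangle: "vnorm n (\<lambda>i. x i + y i) \<le> vnorm n x + vnorm n y"
  unfolding vnorm_eq_L2_set by (rule L2_set_triangle_ineq)

lemma vnorm_diff_triangle:
  "vnorm n (\<lambda>i. x i - z i) \<le> vnorm n (\<lambda>i. x i - y i) + vnorm n (\<lambda>i. y i - z i)"
  using vnorm_triangle[of n "\<lambda>i. x i - y i" "\<lambda>i. y i - z i"] by simp

lemma vnorm_diff_commute: "vnorm n (\<lambda>i. x i - y i) = vnorm n (\<lambda>i. y i - x i)"
  by (simp add: vnorm_def power2_commute)

lemma abs_le_vnorm: "i < n \<Longrightarrow> \<bar>x i\<bar> \<le> vnorm n x"
  unfolding vnorm_def by (rule real_le_rsqrt) (auto intro!: member_le_sum simp: power2_abs)

lemma vnorm_le_sum_abs: "vnorm n x \<le> (\<Sum>i<n. \<bar>x i\<bar>)"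
  unfolding vnorm_eq_L2_set by (rule L2_set_le_sum_abs)

lemma abs_vnorm_diff_le:
  "\<bar>vnorm n (\<lambda>i. x i - z i) - vnorm n (\<lambda>i. y i - z i)\<bar> \<le> vnorm n (\<lambda>i. x i - y i)"
  using vnorm_diff_triangle[of n x z y] vnorm_diff_triangle[of n y z x]
    vnorm_diff_commute[of n x y] by linarith

lemma continuous_on_coordinate: "continuous_on S (\<lambda>x::'a \<Rightarrow> 'b::topological_space. x i)"
  by (rule continuous_on_subset[OF continuous_on_product_coordinates]) simp

lemma continuous_on_vnorm:
  assumes "\<And>i. continuous_on S (\<lambda>s. h s i)"
  shows "continuous_on S (\<lambda>s. vnorm n (h s))"
  unfolding vnorm_def by (intro continuous_intros assms)

lemma norm_sum_scaleR_le_vnorm: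
  "norm (\<Sum>k<n. a k *\<^sub>R v k) \<le> vnorm n a * (\<Sum>k<n. norm (v k))"
proof -
  have "norm (\<Sum>k<n. a k *\<^sub>R v k) \<le> (\<Sum>k<n. \<bar>a k\<bar> * norm (v k))"
    by (rule norm_sum[THEN order_trans]) simp
  also have "\<dots> \<le> (\<Sum>k<n. vnorm n a * norm (v k))"
    by (intro sum_mono mult_right_mono abs_le_vnorm) auto
  finally show ?thesis
    by (simp add: sum_distrib_left)
qed

lemma is_modulus_linear: "0 \<le> L \<Longrightarrow> is_modulus (\<lambda>t. L * t)"
  unfolding is_modulus_def by (auto intro!: continuous_intros mono_onI mult_left_mono)

lemma unit_vector_in_prob_simplex: "0 < N \<Longrightarrow> (\<lambda>i. if i = 0 then 1 else 0) \<in> prob_simplex N"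
  by (auto simp: prob_simplex_def vecs_def)

lemma compact_prob_simplex: "compact (prob_simplex N)"
proof -
  define I where "I i = (if i < N then {0..1::real} else {0})" for i
  have "compactin (product_topology (\<lambda>i. euclidean) UNIV) (PiE UNIV I)"
    by (subst compactin_PiE) (auto simp: I_def)
  then have "compact (PiE UNIV I)"
    by (simp add: euclidean_product_topology compactin_euclidean_iff)
  moreover have "closed {q::nat \<Rightarrow> real. (\<Sum>i<N. q i) = 1}"
    by (intro closed_Collect_eq continuous_intros continuous_on_product_coordinates)
  moreover have "prob_simplex N = PiE UNIV I \<inter> {q. (\<Sum>i<N. q i) = 1}"
  proof -
    have "q i \<le> 1" if "q \<in> prob_simplex N" "i < N" for q i
    proof -
      have "q i \<le> (\<Sum>j<N. q j)"
        using that by (intro member_le_sum) (auto simp: prob_simplex_def)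
      then show ?thesis
        using that by (simp add: prob_simplex_def)
    qed
    then show ?thesis
      by (auto simp: prob_simplex_def vecs_def I_def PiE_UNIV_domain Pi_iff
          split: if_splits)
  qed
  ultimately show ?thesis
    by (simp add: compact_Int_closed)
qed

lemma prob_simplex_midpoint:
  assumes "p \<in> prob_simplex N" "q \<in> prob_simplex N"
  shows "(\<lambda>i. (p i + q i) / 2) \<in> prob_simplex N"
proof -
  have "(\<Sum>i<N. (p i + q i) / 2) = ((\<Sum>i<N. p i) + (\<Sum>i<N. q i)) / 2"
    by (simp add: sum_divide_distrib[symmetric] sum.distrib)
  then show ?thesis
    using assms by (auto simp: prob_simplex_def vecs_def)
qed

lemma ex1_closest_point_prob_simplex:
  assumes "0 < N"
  shows "\<exists>!p. p \<in> prob_simplex N \<and>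
    (\<forall>q\<in>prob_simplex N. vnorm N (\<lambda>i. v i - p i) \<le> vnorm N (\<lambda>i. v i - q i))"
proof (rule ex_ex1I)
  show "\<exists>p. p \<in> prob_simplex N \<and>
      (\<forall>q\<in>prob_simplex N. vnorm N (\<lambda>i. v i - p i) \<le> vnorm N (\<lambda>i. v i - q i))"
  proof -
    have "prob_simplex N \<noteq> {}"
      using unit_vector_in_prob_simplex[OF assms] by blast
    moreover have "continuous_on (prob_simplex N) (\<lambda>q. vnorm N (\<lambda>i. v i - q i))"
      by (intro continuous_on_vnorm continuous_intros continuous_on_coordinate)
    ultimately show ?thesis
      using continuous_attains_inf[OF compact_prob_simplex] by blast
  qed
next
  fix p p'
  assume p: "p \<in> prob_simplex N \<and>
      (\<forall>q\<in>prob_simplex N. vnorm N (\<lambda>i. v i - p i) \<le> vnorm N (\<lambda>i. v i - q i))"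
    and p': "p' \<in> prob_simplex N \<and>
      (\<forall>q\<in>prob_simplex N. vnorm N (\<lambda>i. v i - p' i) \<le> vnorm N (\<lambda>i. v i - q i))"
  define m where "m i = (p i + p' i) / 2" for i
  define sq where "sq x = (\<Sum>i<N. (x i)\<^sup>2)" for x :: "nat \<Rightarrow> real"
  have "m \<in> prob_simplex N"
    unfolding m_def using p p' by (intro prob_simplex_midpoint) auto
  then have "sq (\<lambda>i. v i - p i) \<le> sq (\<lambda>i. v i - m i)" "sq (\<lambda>i. v i - p' i) \<le> sq (\<lambda>i. v i - m i)"
    using p p' by (auto simp: vnorm_def sq_def)
  moreover have "sq (\<lambda>i. v i - m i) =
      (sq (\<lambda>i. v i - p i) + sq (\<lambda>i. v i - p' i)) / 2 - sq (\<lambda>i. p i - p' i) / 4"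
    \<comment> \<open>the parallelogram law\<close>
  proof -
    have "(\<Sum>i<N. (v i - m i)\<^sup>2) =
        (\<Sum>i<N. ((v i - p i)\<^sup>2 + (v i - p' i)\<^sup>2) / 2 - (p i - p' i)\<^sup>2 / 4)"
      by (rule sum.cong) (simp_all add: m_def power2_eq_square field_simps)
    then show ?thesis
      by (simp add: sq_def sum_subtractf flip: sum_divide_distrib sum.distrib)
  qed
  ultimately have "sq (\<lambda>i. p i - p' i) \<le> 0"
    by (simp add: field_simps)
  moreover have "0 \<le> sq (\<lambda>i. p i - p' i)"
    unfolding sq_def by (simp add: sum_nonneg)
  ultimately have "\<forall>i\<in>{..<N}. (p i - p' i)\<^sup>2 = 0"
    unfolding sq_def by (subst sum_nonneg_eq_0_iff[symmetric]) auto
  moreover have "p i = p' i" if "N \<le> i" for i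
    using that p p' by (auto simp: prob_simplex_def vecs_def)
  ultimately show "p = p'"
    by (metis ext lessThan_iff not_le power_eq_0_iff right_minus_eq)
qed

lemma proj_simplex_closest:
  "0 < N \<Longrightarrow> q \<in> prob_simplex N \<Longrightarrow>
    vnorm N (\<lambda>i. v i - proj_simplex N v i) \<le> vnorm N (\<lambda>i. v i - q i)"
  using theI'[OF ex1_closest_point_prob_simplex] unfolding proj_simplex_def by blast

lemma vnorm_proj_simplex_diff_le:
  assumes "0 < N" "g \<in> prob_simplex N"
  shows "vnorm N (\<lambda>i. proj_simplex N v i - g i) \<le> 2 * vnorm N (\<lambda>i. v i - g i)"
  using vnorm_diff_triangle[of N "proj_simplex N v" g v]
    vnorm_diff_commute[of N "proj_simplex N v" v] proj_simplex_closest[OF assms, of v]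
  by linarith

lemma compact_finite_vnorm_net:
  fixes \<Phi> :: "'a::topological_space \<Rightarrow> nat \<Rightarrow> real"
  assumes "compact K" "K \<noteq> {}" "0 < \<rho>" "\<And>i. continuous_on UNIV (\<lambda>x. \<Phi> x i)"
  obtains N :: nat and c where "0 < N" "\<And>j. j < N \<Longrightarrow> c j \<in> K"
    "\<And>x. x \<in> K \<Longrightarrow> \<exists>j<N. vnorm n (\<lambda>i. \<Phi> x i - \<Phi> (c j) i) < \<rho>"
proof -
  define U where "U a = {x. vnorm n (\<lambda>i. \<Phi> x i - \<Phi> a i) < \<rho>}" for a
  have "open (U a)" for a
    unfolding U_def
    by (intro open_Collect_less continuous_on_vnorm continuous_intros assms(4))
  moreover have "K \<subseteq> (\<Union>a\<in>K. U a)"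
    using assms(3) by (auto simp: U_def vnorm_def)
  ultimately obtain C where "C \<subseteq> K" "finite C" and cover: "K \<subseteq> (\<Union>a\<in>C. U a)"
    using compactE_image[OF assms(1)] by metis
  obtain c where c: "bij_betw c {0..<card C} C"
    using ex_bij_betw_nat_finite[OF \<open>finite C\<close>] by blast
  have "0 < card C"
    using cover assms(2) \<open>finite C\<close> by (auto simp: card_gt_0_iff)
  moreover have "c j \<in> K" if "j < card C" for j
    using bij_betwE[OF c] that \<open>C \<subseteq> K\<close> by fastforce
  moreover have "\<exists>j<card C. vnorm n (\<lambda>i. \<Phi> x i - \<Phi> (c j) i) < \<rho>" if "x \<in> K" for x
  proof -
    obtain a where "a \<in> C" "x \<in> U a"
      using cover \<open>x \<in> K\<close> by blast
    then obtain j where "j < card C" "c j = a"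
      using c by (metis atLeastLessThan_iff bij_betw_iff_bijections)
    then show ?thesis
      using \<open>x \<in> U a\<close> by (auto simp: U_def)
  qed
  ultimately show thesis
    by (rule that)
qed

section \<open>Schauder bases\<close>

lemma tendsto_suminf_dominated:
  fixes a :: "nat \<Rightarrow> nat \<Rightarrow> 'a::banach"
  assumes limit: "\<And>k. (\<lambda>n. a k n) \<longlonglongrightarrow> b k"
    and bound: "\<And>k n. norm (a k n) \<le> M k"
    and "summable M"
  shows "(\<lambda>n. \<Sum>k. a k n) \<longlonglongrightarrow> (\<Sum>k. b k)"
proof (rule swap_uniform_limit')
  have "norm (b k) \<le> M k" for k
    by (rule tendsto_upperbound[OF tendsto_norm[OF limit]]) (use bound in auto)
  then have "summable (\<lambda>k. norm (b k))"
    by (intro summable_comparison_test'[OF \<open>summable M\<close>]) auto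
  then show "(\<lambda>K. \<Sum>k<K. b k) \<longlonglongrightarrow> (\<Sum>k. b k)"
    by (intro summable_LIMSEQ) (auto dest: summable_norm_cancel)
  show "\<forall>\<^sub>F K in sequentially. ((\<lambda>n. \<Sum>k<K. a k n) \<longlongrightarrow> (\<Sum>k<K. b k)) sequentially"
    by (intro tendsto_intros always_eventually allI limit)
  show "uniform_limit UNIV (\<lambda>K n. \<Sum>k<K. a k n) (\<lambda>n. \<Sum>k. a k n) sequentially"
    by (rule Weierstrass_m_test) (use bound \<open>summable M\<close> in auto)
qed auto

locale schauder =
  fixes e :: "nat \<Rightarrow> 'a::banach"
  assumes schauder_basis: "schauder_basis e"
begin

abbreviation coeff :: "'a \<Rightarrow> nat \<Rightarrow> real" where
  "coeff \<equiv> schauder_coeff e"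

definition partial_sum :: "nat \<Rightarrow> 'a \<Rightarrow> 'a" where
  "partial_sum n x = (\<Sum>k<n. coeff x k *\<^sub>R e k)"

lemma ex1_expansion: "\<exists>!\<beta>. (\<lambda>n. \<Sum>k<n. \<beta> k *\<^sub>R e k) \<longlonglongrightarrow> x"
  using schauder_basis unfolding schauder_basis_def by blast

lemma partial_sum_tendsto: "(\<lambda>n. partial_sum n x) \<longlonglongrightarrow> x"
  using theI'[OF ex1_expansion] unfolding partial_sum_def schauder_coeff_def .

lemma coeff_eqI: "(\<lambda>n. \<Sum>k<n. \<beta> k *\<^sub>R e k) \<longlonglongrightarrow> x \<Longrightarrow> coeff x = \<beta>"
  unfolding schauder_coeff_def using ex1_expansion by (rule the1_equality)

lemma coeff_add: "coeff (x + y) = (\<lambda>k. coeff x k + coeff y k)"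
  using tendsto_add[OF partial_sum_tendsto partial_sum_tendsto, of x y]
  by (intro coeff_eqI) (simp add: partial_sum_def scaleR_add_left sum.distrib)

lemma coeff_scaleR: "coeff (c *\<^sub>R x) = (\<lambda>k. c * coeff x k)"
  using tendsto_scaleR[OF tendsto_const partial_sum_tendsto, of c x]
  by (intro coeff_eqI) (simp add: partial_sum_def scaleR_sum_right)

lemma coeff_diff: "coeff (x - y) = (\<lambda>k. coeff x k - coeff y k)"
  using coeff_add[of x "(-1) *\<^sub>R y"] coeff_scaleR[of "-1" y] by simp

lemma partial_sum_scaleR: "partial_sum n (c *\<^sub>R x) = c *\<^sub>R partial_sum n x"
  by (simp add: partial_sum_def coeff_scaleR scaleR_sum_right)

lemma partial_sum_diff: "partial_sum n (x - y) = partial_sum n x - partial_sum n y"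
  by (simp add: partial_sum_def coeff_diff scaleR_diff_left sum_subtractf)

lemma partial_sum_Suc: "partial_sum (Suc k) x = partial_sum k x + coeff x k *\<^sub>R e k"
  by (simp add: partial_sum_def)

lemma basis_nonzero: "e k \<noteq> 0"
proof
  assume "e k = 0"
  then have "(\<Sum>j<n. (if j = k then 1 else 0) *\<^sub>R e j) = 0" for n
    by (intro sum.neutral) auto
  then have "(\<lambda>n. \<Sum>j<n. (if j = k then 1 else 0) *\<^sub>R e j) \<longlonglongrightarrow> 0"
    by simp
  then have "coeff 0 = (\<lambda>j. if j = k then 1 else 0)"
    by (rule coeff_eqI)
  moreover have "coeff 0 = (\<lambda>j. 0)"
    by (rule coeff_eqI) simp
  ultimately show False
    by (metis zero_neq_one)
qed

lemma abs_coeff_mult_norm_le: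
  "\<bar>coeff x k\<bar> * norm (e k) \<le> norm (partial_sum (Suc k) x) + norm (partial_sum k x)"
  using norm_triangle_ineq4[of "partial_sum (Suc k) x" "partial_sum k x"]
  by (simp add: partial_sum_Suc)

definition bounded_partial_sums :: "real \<Rightarrow> 'a set" where
  "bounded_partial_sums m = {x. \<forall>n. norm (partial_sum n x) \<le> m}"

lemma ex_bounded_partial_sums: "\<exists>m::nat. x \<in> bounded_partial_sums m"
proof -
  have "Bseq (\<lambda>n. partial_sum n x)"
    using partial_sum_tendsto by (blast intro: convergent_imp_Bseq convergentI)
  then obtain B where "\<And>n. norm (partial_sum n x) \<le> B"
    unfolding Bseq_def by blast
  then have "x \<in> bounded_partial_sums (nat \<lceil>B\<rceil>)"
    unfolding bounded_partial_sums_def by (auto intro: order_trans[OF _ real_nat_ceiling_ge])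
  then show ?thesis ..
qed

lemma bounded_partial_sums_half_diff:
  assumes "x \<in> bounded_partial_sums m" "y \<in> bounded_partial_sums m"
  shows "(1/2) *\<^sub>R (x - y) \<in> bounded_partial_sums m"
proof -
  have "norm (partial_sum n x - partial_sum n y) \<le> 2 * m" for n
  proof -
    have "norm (partial_sum n x) \<le> m" "norm (partial_sum n y) \<le> m"
      using assms unfolding bounded_partial_sums_def by auto
    then show ?thesis
      using norm_triangle_ineq4[of "partial_sum n x" "partial_sum n y"] by linarith
  qed
  then show ?thesis
    by (simp add: bounded_partial_sums_def partial_sum_scaleR partial_sum_diff mult.commute)
qed

lemma bounded_partial_sums_scaleR:
  "x \<in> bounded_partial_sums m \<Longrightarrow> 0 \<le> c \<Longrightarrow> c *\<^sub>R x \<in> bounded_partial_sums (c * m)"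
  by (simp add: bounded_partial_sums_def partial_sum_scaleR mult_left_mono)

lemma ex_interior_closure_bounded_partial_sums:
  "\<exists>m::nat. interior (closure (bounded_partial_sums m)) \<noteq> {}"
proof (rule ccontr)
  assume "\<nexists>m::nat. interior (closure (bounded_partial_sums m)) \<noteq> {}"
  then have "euclidean interior_of (\<Union>m::nat. closure (bounded_partial_sums m)) = {}"
    by (intro Baire_category_alt) (auto simp: completely_metrizable_space_euclidean)
  moreover have "(\<Union>m::nat. closure (bounded_partial_sums m)) = UNIV"
    using ex_bounded_partial_sums closure_subset by blast
  ultimately show False
    by simp
qed

lemma ball_subset_closure_bounded_partial_sums:
  obtains m r where "0 \<le> m" "0 < r" "ball 0 r \<subseteq> closure (bounded_partial_sums m)"
proof -
  obtain m :: nat and x0 where "x0 \<in> interior (closure (bounded_partial_sums m))"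
    using ex_interior_closure_bounded_partial_sums by blast
  then obtain r where "0 < r" and r: "ball x0 r \<subseteq> closure (bounded_partial_sums m)"
    by (meson open_contains_ball open_interior interior_subset subset_trans)
  have "y \<in> closure (bounded_partial_sums m)" if "norm y < r" for y
    unfolding closure_approachable
  proof (intro allI impI)
    fix \<delta> :: real
    assume "0 < \<delta>"
    have "x0 + y \<in> closure (bounded_partial_sums m)" "x0 - y \<in> closure (bounded_partial_sums m)"
      using r that by (auto simp: dist_norm)
    then obtain a1 a2 where a: "a1 \<in> bounded_partial_sums m" "dist a1 (x0 + y) < \<delta>"
      "a2 \<in> bounded_partial_sums m" "dist a2 (x0 - y) < \<delta>"
      using \<open>0 < \<delta>\<close> closure_approachable by metis
    have "(1/2) *\<^sub>R (a1 - a2) - y = (1/2) *\<^sub>R ((a1 - (x0 + y)) - (a2 - (x0 - y)))"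
      by (simp add: algebra_simps flip: scaleR_add_left)
    then have "dist ((1/2) *\<^sub>R (a1 - a2)) y \<le> (dist a1 (x0 + y) + dist a2 (x0 - y)) / 2"
      using norm_triangle_ineq4[of "a1 - (x0 + y)" "a2 - (x0 - y)"] by (simp add: dist_norm)
    then show "\<exists>a\<in>bounded_partial_sums m. dist a y < \<delta>"
      using a bounded_partial_sums_half_diff[of a1 m a2] by force
  qed
  then have "ball 0 r \<subseteq> closure (bounded_partial_sums m)"
    by (auto simp: dist_norm)
  with \<open>0 < r\<close> show thesis
    using that[of m r] by simp
qed

lemma sums_in_bounded_partial_sums:
  assumes "a sums y" "summable M" "\<And>j. a j \<in> bounded_partial_sums (M j)"
  shows "y \<in> bounded_partial_sums (suminf M)"
proof -
  have bound: "norm (partial_sum n (a j)) \<le> M j" for j n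
    using assms(3) unfolding bounded_partial_sums_def by auto
  have "summable (\<lambda>j. coeff (a j) k)" for k
  proof (rule summable_comparison_test')
    show "summable (\<lambda>j. 2 * M j / norm (e k))"
      using assms(2) by (intro summable_divide summable_mult)
    show "norm (coeff (a j) k) \<le> 2 * M j / norm (e k)" for j
      using abs_coeff_mult_norm_le[of "a j" k] bound[of "Suc k" j] bound[of k j]
        basis_nonzero[of k]
      by (simp add: field_simps)
  qed
  then have expansion: "(\<Sum>k<n. (\<Sum>j. coeff (a j) k) *\<^sub>R e k) = (\<Sum>j. partial_sum n (a j))" for n
    by (simp add: partial_sum_def suminf_scaleR_left summable_scaleR_left flip: suminf_sum)
  moreover have "(\<lambda>n. \<Sum>j. partial_sum n (a j)) \<longlonglongrightarrow> y"
    using tendsto_suminf_dominated[OF partial_sum_tendsto bound assms(2)] assms(1)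
    by (simp add: sums_iff)
  ultimately have "coeff y = (\<lambda>k. \<Sum>j. coeff (a j) k)"
    by (intro coeff_eqI) simp
  then have "partial_sum n y = (\<Sum>j. partial_sum n (a j))" for n
    using expansion by (simp add: partial_sum_def)
  then show ?thesis
    using norm_suminf_le[OF bound assms(2)] by (simp add: bounded_partial_sums_def)
qed

lemma closure_bounded_partial_sums_approx:
  assumes "ball 0 r \<subseteq> closure (bounded_partial_sums m)" "0 < c" "norm u < r * c"
  shows "\<exists>a. a \<in> bounded_partial_sums (c * m) \<and> norm (u - a) < r * c / 2"
proof -
  have "0 < r * c"
    using assms(3) norm_ge_zero[of u] by linarith
  then have "0 < r"
    using assms(2) by (simp add: zero_less_mult_iff)
  have "(1 / c) *\<^sub>R u \<in> closure (bounded_partial_sums m)"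
    using assms by (auto simp: field_simps)
  then obtain a where a: "a \<in> bounded_partial_sums m" "dist a ((1 / c) *\<^sub>R u) < r / 2"
    using \<open>0 < r\<close> closure_approachable half_gt_zero by metis
  have "u - c *\<^sub>R a = c *\<^sub>R ((1 / c) *\<^sub>R u - a)"
    using assms(2) by (simp add: algebra_simps)
  then have "norm (u - c *\<^sub>R a) = c * norm ((1 / c) *\<^sub>R u - a)"
    using assms(2) by simp
  also have "\<dots> < c * (r / 2)"
    using a(2) assms(2) by (simp add: dist_norm norm_minus_commute)
  finally have "norm (u - c *\<^sub>R a) < r * c / 2"
    by (simp add: mult.commute)
  moreover have "c *\<^sub>R a \<in> bounded_partial_sums (c * m)"
    using bounded_partial_sums_scaleR[OF a(1)] assms(2) by simp
  ultimately show ?thesis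
    by blast
qed

lemma ball_subset_bounded_partial_sums:
  obtains m r where "0 \<le> m" "0 < r" "ball 0 r \<subseteq> bounded_partial_sums m"
proof -
  obtain m r where "0 \<le> m" "0 < r" and dense: "ball 0 r \<subseteq> closure (bounded_partial_sums m)"
    by (rule ball_subset_closure_bounded_partial_sums)
  define pick where "pick j u =
      (SOME a. a \<in> bounded_partial_sums ((1/2)^j * m) \<and> norm (u - a) < r * (1/2)^j / 2)" for j u
  have pick: "pick j u \<in> bounded_partial_sums ((1/2)^j * m) \<and> norm (u - pick j u) < r * (1/2)^j / 2"
    if "norm u < r * (1/2)^j" for j u
    unfolding pick_def
    by (rule someI_ex[OF closure_bounded_partial_sums_approx[OF dense _ that]]) simp
  have "y \<in> bounded_partial_sums (2 * m)" if "norm y < r" for y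
  proof -
    \<comment> \<open>\<open>y\<close> is the sum of the greedy approximations \<open>a j\<close> of the remainders \<open>u j\<close>\<close>
    define u where "u = rec_nat y (\<lambda>j v. v - pick j v)"
    define a where "a j = pick j (u j)" for j
    have u_0: "u 0 = y" and u_Suc: "u (Suc j) = u j - a j" for j
      by (simp_all add: u_def a_def)
    have u_small: "norm (u j) < r * (1/2)^j" for j
      by (induction j) (use that pick in \<open>simp_all add: u_0 u_Suc a_def\<close>)
    have "(\<lambda>j. r * (1/2)^j) \<longlonglongrightarrow> 0"
      by (intro tendsto_mult_right_zero LIMSEQ_realpow_zero) auto
    then have "u \<longlonglongrightarrow> 0"
      by (rule Lim_null_comparison[rotated]) (use u_small less_imp_le in \<open>auto intro: always_eventually\<close>)
    moreover have "(\<Sum>i<J. a i) = y - u J" for J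
      by (induction J) (simp_all add: u_0 u_Suc)
    ultimately have "a sums y"
      unfolding sums_def using tendsto_diff[OF tendsto_const, of u 0 _ y] by simp
    moreover have "a j \<in> bounded_partial_sums ((1/2)^j * m)" for j
      using pick u_small unfolding a_def by blast
    ultimately have "y \<in> bounded_partial_sums (\<Sum>j. (1/2)^j * m)"
      by (intro sums_in_bounded_partial_sums summable_mult2 summable_geometric) auto
    moreover have "(\<Sum>j. (1/2::real)^j * m) = 2 * m"
      by (simp add: suminf_mult2[symmetric] summable_geometric suminf_geometric)
    ultimately show ?thesis
      by simp
  qed
  then have "ball 0 r \<subseteq> bounded_partial_sums (2 * m)"
    by (auto simp: dist_norm)
  with \<open>0 \<le> m\<close> \<open>0 < r\<close> show thesis
    using that[of "2 * m" r] by simp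
qed

lemma partial_sum_uniformly_bounded:
  obtains C where "0 \<le> C" "\<And>n x. norm (partial_sum n x) \<le> C * norm x"
proof -
  obtain m r where "0 \<le> m" "0 < r" and ball: "ball 0 r \<subseteq> bounded_partial_sums m"
    by (rule ball_subset_bounded_partial_sums)
  have "norm (partial_sum n x) \<le> 2 * m / r * norm x" for n x
  proof (cases "x = 0")
    case True
    then show ?thesis
      using partial_sum_scaleR[of n 0 0] by simp
  next
    case False
    define c where "c = r / (2 * norm x)"
    have "0 < c"
      using False \<open>0 < r\<close> by (simp add: c_def)
    have "c *\<^sub>R x \<in> ball 0 r"
      using False \<open>0 < r\<close> by (simp add: c_def)
    then have "norm (partial_sum n (c *\<^sub>R x)) \<le> m"
      using ball unfolding bounded_partial_sums_def by blast
    then have "c * norm (partial_sum n x) \<le> m"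
      using \<open>0 < c\<close> by (simp add: partial_sum_scaleR)
    then show ?thesis
      using False \<open>0 < r\<close> by (simp add: c_def field_simps)
  qed
  with \<open>0 \<le> m\<close> \<open>0 < r\<close> show thesis
    using that[of "2 * m / r"] by simp
qed

lemma bounded_linear_coeff: "bounded_linear (\<lambda>x. coeff x k)"
proof -
  obtain C where C: "\<And>n x. norm (partial_sum n x) \<le> C * norm x"
    using partial_sum_uniformly_bounded by blast
  have "\<bar>coeff x k\<bar> \<le> norm x * (2 * C / norm (e k))" for x
    using abs_coeff_mult_norm_le[of x k] C[of "Suc k" x] C[of k x] basis_nonzero[of k]
    by (simp add: field_simps)
  then show ?thesis
    by (intro bounded_linear_intro[where K = "2 * C / norm (e k)"])
      (auto simp: coeff_add coeff_scaleR)
qed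

lemma partial_sum_uniform_convergence:
  assumes "compact K" "0 < \<eta>"
  obtains n0 where "\<And>n x. n0 \<le> n \<Longrightarrow> x \<in> K \<Longrightarrow> norm (x - partial_sum n x) \<le> \<eta>"
proof -
  obtain C where "0 \<le> C" and C: "\<And>n x. norm (partial_sum n x) \<le> C * norm x"
    using partial_sum_uniformly_bounded by blast
  define \<sigma> where "\<sigma> = \<eta> / (2 * (1 + C))"
  have "0 < \<sigma>"
    using \<open>0 \<le> C\<close> assms(2) by (simp add: \<sigma>_def)
  then obtain S where "finite S" "S \<subseteq> K" and cover: "K \<subseteq> (\<Union>s\<in>S. ball s \<sigma>)"
    using seq_compact_imp_totally_bounded[OF compact_imp_seq_compact[OF assms(1)]] by metis
  have "\<forall>\<^sub>F n in sequentially. \<forall>s\<in>S. dist (partial_sum n s) s < \<eta> / 2"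
    using \<open>finite S\<close> assms(2)
    by (intro eventually_ball_finite ballI tendstoD[OF partial_sum_tendsto]) auto
  then obtain n0 where n0: "\<And>n s. n0 \<le> n \<Longrightarrow> s \<in> S \<Longrightarrow> dist (partial_sum n s) s < \<eta> / 2"
    unfolding eventually_sequentially by blast
  have "norm (x - partial_sum n x) \<le> \<eta>" if "n0 \<le> n" "x \<in> K" for n x
  proof -
    obtain s where "s \<in> S" and "norm (x - s) < \<sigma>"
      using cover \<open>x \<in> K\<close> by (force simp: dist_norm norm_minus_commute)
    have decomp: "x - partial_sum n x = (x - s) + (s - partial_sum n s) + partial_sum n (s - x)"
      by (simp add: partial_sum_diff)
    have "norm (x - partial_sum n x)
        \<le> norm (x - s) + norm (s - partial_sum n s) + norm (partial_sum n (s - x))"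
      using norm_triangle_ineq[of "(x - s) + (s - partial_sum n s)" "partial_sum n (s - x)"]
        norm_triangle_ineq[of "x - s" "s - partial_sum n s"]
      unfolding decomp by linarith
    also have "\<dots> \<le> \<sigma> + \<eta> / 2 + C * \<sigma>"
      using \<open>norm (x - s) < \<sigma>\<close> n0[OF \<open>n0 \<le> n\<close> \<open>s \<in> S\<close>] C[of n "s - x"]
        mult_left_mono[of "norm (s - x)" \<sigma> C] \<open>0 \<le> C\<close>
      by (simp add: dist_norm norm_minus_commute)
    also have "\<dots> = \<sigma> * (1 + C) + \<eta> / 2"
      by (simp add: algebra_simps)
    also have "\<dots> = \<eta>"
      using \<open>0 \<le> C\<close> by (simp add: \<sigma>_def field_simps)
    finally show ?thesis .
  qed
  then show thesis
    by (rule that)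
qed

definition coords :: "nat \<Rightarrow> 'a \<Rightarrow> nat \<Rightarrow> real" where
  "coords n x = (\<lambda>k. if k < n then coeff x k else 0)"

lemma coords_in_vecs: "coords n x \<in> vecs n"
  by (simp add: coords_def vecs_def)

lemma continuous_on_coords: "continuous_on S (\<lambda>x. coords n x k)"
  by (cases "k < n") (simp_all add: coords_def linear_continuous_on[OF bounded_linear_coeff])

lemma norm_partial_sum_diff_le:
  "norm (partial_sum n x - partial_sum n y)
    \<le> vnorm n (\<lambda>k. coords n x k - coords n y k) * (\<Sum>k<n. norm (e k))"
proof -
  have "partial_sum n x - partial_sum n y = (\<Sum>k<n. (coords n x k - coords n y k) *\<^sub>R e k)"
    by (simp add: partial_sum_def coords_def scaleR_diff_left sum_subtractf)
  then show ?thesis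
    by (simp add: norm_sum_scaleR_le_vnorm)
qed

lemma coords_close_imp_close:
  assumes "compact K" "0 < \<delta>"
  obtains n \<rho> where "0 < n" "0 < \<rho>"
    "\<And>x y. x \<in> K \<Longrightarrow> y \<in> K \<Longrightarrow> vnorm n (\<lambda>k. coords n x k - coords n y k) < \<rho> \<Longrightarrow> norm (x - y) < \<delta>"
proof -
  obtain n0 where n0: "\<And>n x. n0 \<le> n \<Longrightarrow> x \<in> K \<Longrightarrow> norm (x - partial_sum n x) \<le> \<delta> / 4"
    using partial_sum_uniform_convergence[OF assms(1)] assms(2) by (metis zero_less_divide_iff zero_less_numeral)
  define n where "n = Suc n0"
  define L where "L = 1 + (\<Sum>k<n. norm (e k))"
  have "0 < L"
    using sum_nonneg[of "{..<n}" "\<lambda>k. norm (e k)"] by (simp add: L_def)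
  have "norm (x - y) < \<delta>"
    if "x \<in> K" "y \<in> K" and close: "vnorm n (\<lambda>k. coords n x k - coords n y k) < \<delta> / (4 * L)" for x y
  proof -
    let ?d = "vnorm n (\<lambda>k. coords n x k - coords n y k)"
    have decomp: "x - y = (x - partial_sum n x) + (partial_sum n x - partial_sum n y) - (y - partial_sum n y)"
      by simp
    have "norm (x - y)
        \<le> norm (x - partial_sum n x) + norm (partial_sum n x - partial_sum n y) + norm (y - partial_sum n y)"
      using norm_triangle_ineq4[of "(x - partial_sum n x) + (partial_sum n x - partial_sum n y)"
          "y - partial_sum n y"]
        norm_triangle_ineq[of "x - partial_sum n x" "partial_sum n x - partial_sum n y"]
      unfolding decomp by linarith
    moreover have "?d * (\<Sum>k<n. norm (e k)) \<le> ?d * L"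
      by (intro mult_left_mono) (simp_all add: L_def vnorm_nonneg)
    then have "norm (partial_sum n x - partial_sum n y) \<le> ?d * L"
      using norm_partial_sum_diff_le[of n x y] by linarith
    moreover have "?d * L < \<delta> / 4"
      using close \<open>0 < L\<close> by (simp add: field_simps)
    ultimately show ?thesis
      using n0[of n x] n0[of n y] that assms(2) by (simp add: n_def)
  qed
  then show thesis
    using that[of n "\<delta> / (4 * L)"] \<open>0 < L\<close> assms(2) by (simp add: n_def)
qed

lemma compact_coords_net:
  fixes f :: "'a \<Rightarrow> 'b::metric_space"
  assumes "compact K" "K \<noteq> {}" "continuous_on K f" "0 < \<eta>"
  obtains n \<rho> and N :: nat and c where "0 < n" "0 < \<rho>" "0 < N" "\<And>j. j < N \<Longrightarrow> c j \<in> K"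
    "\<And>x. x \<in> K \<Longrightarrow> \<exists>j<N. vnorm n (\<lambda>k. coords n x k - coords n (c j) k) < \<rho> / 2"
    "\<And>x j. x \<in> K \<Longrightarrow> j < N \<Longrightarrow> vnorm n (\<lambda>k. coords n x k - coords n (c j) k) < \<rho> \<Longrightarrow>
      dist (f x) (f (c j)) < \<eta>"
proof -
  obtain \<delta> where "0 < \<delta>"
    and \<delta>: "\<And>x x'. x \<in> K \<Longrightarrow> x' \<in> K \<Longrightarrow> dist x' x < \<delta> \<Longrightarrow> dist (f x') (f x) < \<eta>"
    using compact_uniformly_continuous[OF assms(3,1)] assms(4)
    unfolding uniformly_continuous_on_def by metis
  obtain n \<rho> where "0 < n" "0 < \<rho>" and close: "\<And>x x'. x \<in> K \<Longrightarrow> x' \<in> K \<Longrightarrow>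
      vnorm n (\<lambda>k. coords n x k - coords n x' k) < \<rho> \<Longrightarrow> norm (x - x') < \<delta>"
    by (rule coords_close_imp_close[OF assms(1) \<open>0 < \<delta>\<close>]) (rule that)
  obtain N :: nat and c where "0 < N" and c: "\<And>j. j < N \<Longrightarrow> c j \<in> K"
    and net: "\<And>x. x \<in> K \<Longrightarrow> \<exists>j<N. vnorm n (\<lambda>k. coords n x k - coords n (c j) k) < \<rho> / 2"
    using compact_finite_vnorm_net[where \<Phi> = "coords n" and n = n,
        OF assms(1,2) half_gt_zero[OF \<open>0 < \<rho>\<close>] continuous_on_coords]
    by blast
  have "dist (f x) (f (c j)) < \<eta>"
    if "x \<in> K" "j < N" "vnorm n (\<lambda>k. coords n x k - coords n (c j) k) < \<rho>" for x j
    using \<delta>[OF c[OF \<open>j < N\<close>] \<open>x \<in> K\<close>] close[OF \<open>x \<in> K\<close> c[OF \<open>j < N\<close>] that(3)]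
    by (simp add: dist_norm)
  with \<open>0 < n\<close> \<open>0 < \<rho>\<close> \<open>0 < N\<close> c net show thesis
    by (rule that)
qed

end

section \<open>Tent partitions of unity\<close>

lemma abs_divide_diff_le:
  fixes a a' D D' \<rho> t M :: real
  assumes "0 \<le> a'" "a' \<le> \<rho>" "\<rho> / 2 \<le> D" "\<rho> / 2 \<le> D'" "0 < \<rho>"
    "\<bar>a - a'\<bar> \<le> t" "\<bar>D - D'\<bar> \<le> M * t" "0 \<le> M"
  shows "\<bar>a / D - a' / D'\<bar> \<le> (2 + 4 * M) / \<rho> * t"
proof -
  have "0 < D" "0 < D'" "0 \<le> t"
    using assms by linarith+
  have decomp: "a / D - a' / D' = (a - a') / D + a' * (D' - D) / (D * D')"
    using \<open>0 < D\<close> \<open>0 < D'\<close> by (simp add: field_simps)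
  have numerator: "\<bar>(a - a') / D\<bar> \<le> 2 * t / \<rho>"
  proof -
    have "\<bar>(a - a') / D\<bar> \<le> t / D"
      using \<open>0 < D\<close> assms(6) by (simp add: divide_right_mono)
    also have "\<dots> \<le> t / (\<rho> / 2)"
      using assms(3,5) \<open>0 \<le> t\<close> by (intro divide_left_mono) auto
    finally show ?thesis
      by (simp add: mult.commute)
  qed
  have denominator: "\<bar>a' * (D' - D) / (D * D')\<bar> \<le> 4 * M * t / \<rho>"
  proof -
    have "\<bar>a' * (D' - D) / (D * D')\<bar> = a' * \<bar>D - D'\<bar> / (D * D')"
      using \<open>0 < D\<close> \<open>0 < D'\<close> assms(1) by (simp add: abs_mult abs_minus_commute)
    also have "\<dots> \<le> \<rho> * (M * t) / (D * D')"
      using \<open>0 < D\<close> \<open>0 < D'\<close> assms by (intro divide_right_mono mult_mono) auto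
    also have "\<dots> \<le> \<rho> * (M * t) / ((\<rho> / 2) * (\<rho> / 2))"
      using assms \<open>0 \<le> t\<close> by (intro divide_left_mono mult_mono mult_nonneg_nonneg) auto
    also have "\<dots> = 4 * M * t / \<rho>"
      using assms(5) by (simp add: field_simps)
    finally show ?thesis .
  qed
  have "\<bar>a / D - a' / D'\<bar> \<le> 2 * t / \<rho> + 4 * M * t / \<rho>"
    unfolding decomp using abs_triangle_ineq numerator denominator by (rule order_trans[OF _ add_mono])
  also have "\<dots> = (2 + 4 * M) / \<rho> * t"
    by (simp add: add_divide_distrib algebra_simps)
  finally show ?thesis .
qed

definition tent :: "real \<Rightarrow> nat \<Rightarrow> (nat \<Rightarrow> real) \<Rightarrow> (nat \<Rightarrow> real) \<Rightarrow> real" where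
  "tent \<rho> n c b = max 0 (\<rho> - vnorm n (\<lambda>k. b k - c k))"

definition tent_partition ::
    "real \<Rightarrow> nat \<Rightarrow> nat \<Rightarrow> (nat \<Rightarrow> nat \<Rightarrow> real) \<Rightarrow> (nat \<Rightarrow> real) \<Rightarrow> nat \<Rightarrow> real" where
  "tent_partition \<rho> n N a b =
    (\<lambda>j. if j < N then tent \<rho> n (a j) b / max (\<rho> / 2) (\<Sum>i<N. tent \<rho> n (a i) b) else 0)"

lemma tent_nonneg: "0 \<le> tent \<rho> n c b"
  by (simp add: tent_def)

lemma tent_le: "0 \<le> \<rho> \<Longrightarrow> tent \<rho> n c b \<le> \<rho>"
  using vnorm_nonneg[of n] by (simp add: tent_def)

lemma abs_tent_diff_le: "\<bar>tent \<rho> n c b - tent \<rho> n c b'\<bar> \<le> vnorm n (\<lambda>k. b k - b' k)"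
  using abs_vnorm_diff_le[of n b c b'] by (simp add: tent_def)

lemma abs_tent_partition_diff_le:
  assumes "0 < \<rho>"
  shows "\<bar>tent_partition \<rho> n N a b j - tent_partition \<rho> n N a b' j\<bar>
    \<le> (2 + 4 * real N) / \<rho> * vnorm n (\<lambda>k. b k - b' k)"
proof (cases "j < N")
  case True
  let ?s = "\<lambda>b. \<Sum>i<N. tent \<rho> n (a i) b"
  have "\<bar>?s b - ?s b'\<bar> \<le> (\<Sum>i<N. \<bar>tent \<rho> n (a i) b - tent \<rho> n (a i) b'\<bar>)"
    unfolding sum_subtractf[symmetric] by (rule sum_abs)
  also have "\<dots> \<le> (\<Sum>i<N. vnorm n (\<lambda>k. b k - b' k))"
    by (intro sum_mono abs_tent_diff_le)
  finally have "\<bar>max (\<rho> / 2) (?s b) - max (\<rho> / 2) (?s b')\<bar> \<le> real N * vnorm n (\<lambda>k. b k - b' k)"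
    by simp
  then have "\<bar>tent \<rho> n (a j) b / max (\<rho> / 2) (?s b) - tent \<rho> n (a j) b' / max (\<rho> / 2) (?s b')\<bar>
      \<le> (2 + 4 * real N) / \<rho> * vnorm n (\<lambda>k. b k - b' k)"
    using assms by (intro abs_divide_diff_le) (auto simp: tent_nonneg tent_le abs_tent_diff_le)
  with True show ?thesis
    by (simp add: tent_partition_def)
next
  case False
  then show ?thesis
    using assms vnorm_nonneg[of n] by (simp add: tent_partition_def)
qed

lemma has_modulus_tent_partition:
  assumes "0 < \<rho>"
  shows "has_modulus n N (\<lambda>t. real N * ((2 + 4 * real N) / \<rho>) * t) (tent_partition \<rho> n N a)"
  unfolding has_modulus_def
proof (intro conjI ballI)
  show "tent_partition \<rho> n N a ` vecs n \<subseteq> vecs N"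
    by (auto simp: tent_partition_def vecs_def)
  fix b b'
  have "vnorm N (\<lambda>j. tent_partition \<rho> n N a b j - tent_partition \<rho> n N a b' j)
      \<le> (\<Sum>j<N. \<bar>tent_partition \<rho> n N a b j - tent_partition \<rho> n N a b' j\<bar>)"
    by (rule vnorm_le_sum_abs)
  also have "\<dots> \<le> (\<Sum>j<N. (2 + 4 * real N) / \<rho> * vnorm n (\<lambda>k. b k - b' k))"
    using assms by (intro sum_mono abs_tent_partition_diff_le)
  finally show "vnorm N (\<lambda>j. tent_partition \<rho> n N a b j - tent_partition \<rho> n N a b' j)
      \<le> real N * ((2 + 4 * real N) / \<rho>) * vnorm n (\<lambda>k. b k - b' k)"
    by simp
qed

lemma tent_partition_in_prob_simplex:
  assumes "j0 < N" "vnorm n (\<lambda>k. b k - a j0 k) < \<rho> / 2"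
  shows "tent_partition \<rho> n N a b \<in> prob_simplex N"
proof -
  let ?s = "\<Sum>i<N. tent \<rho> n (a i) b"
  have "0 < \<rho>"
    using assms(2) vnorm_nonneg[of n "\<lambda>k. b k - a j0 k"] by linarith
  have "\<rho> / 2 < tent \<rho> n (a j0) b"
    using assms(2) vnorm_nonneg[of n "\<lambda>k. b k - a j0 k"] by (simp add: tent_def)
  also have "\<dots> \<le> ?s"
    using assms(1) by (intro member_le_sum) (auto simp: tent_nonneg)
  finally have max_eq: "max (\<rho> / 2) ?s = ?s" and "0 < ?s"
    using \<open>0 < \<rho>\<close> by auto
  then have "(\<Sum>j<N. tent_partition \<rho> n N a b j) = 1"
    by (simp add: tent_partition_def flip: sum_divide_distrib)
  then show ?thesis
    using \<open>0 < ?s\<close> by (simp add: prob_simplex_def vecs_def tent_partition_def tent_nonneg max_eq)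
qed

lemma tent_partition_nonzero_imp_close:
  "tent_partition \<rho> n N a b j \<noteq> 0 \<Longrightarrow> vnorm n (\<lambda>k. b k - a j k) < \<rho>"
  by (auto simp: tent_partition_def tent_def split: if_splits)

section \<open>Approximation through the simplex\<close>

lemma universal_approximator_proj_simplex:
  assumes "universal_approximator F r" "0 < N" "0 \<le> L" "has_modulus n N (\<lambda>t. L * t) g"
    and "compact S" "S \<subseteq> vecs n" "g ` S \<subseteq> prob_simplex N" "0 < \<tau>"
  obtains c fh where "fh \<in> F n N c"
    "\<And>b j. b \<in> S \<Longrightarrow> j < N \<Longrightarrow> \<bar>proj_simplex N (fh b) j - g b j\<bar> \<le> \<tau>"
proof -
  have approx: "\<exists>fh\<in>F n N c. \<forall>b\<in>S. vnorm N (\<lambda>i. g b i - fh b i) \<le> r (\<lambda>t. L * t) S n N c" for c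
    using assms(1,4-6) is_modulus_linear[OF assms(3)] unfolding universal_approximator_def by blast
  have "(\<lambda>c. r (\<lambda>t. L * t) S n N c) \<longlonglongrightarrow> 0"
    using assms(1) unfolding universal_approximator_def by blast
  then have "\<forall>\<^sub>F c in sequentially. r (\<lambda>t. L * t) S n N c < \<tau> / 2"
    using assms(8) by (intro order_tendstoD(2)) auto
  then obtain c where "r (\<lambda>t. L * t) S n N c < \<tau> / 2"
    by (meson eventually_sequentially order_refl)
  with approx obtain fh where "fh \<in> F n N c" and fh: "\<And>b. b \<in> S \<Longrightarrow> vnorm N (\<lambda>i. g b i - fh b i) < \<tau> / 2"
    by fastforce
  have "\<bar>proj_simplex N (fh b) j - g b j\<bar> \<le> \<tau>" if "b \<in> S" "j < N" for b j
  proof -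
    have "\<bar>proj_simplex N (fh b) j - g b j\<bar> \<le> vnorm N (\<lambda>i. proj_simplex N (fh b) i - g b i)"
      using \<open>j < N\<close> by (rule abs_le_vnorm)
    also have "\<dots> \<le> 2 * vnorm N (\<lambda>i. fh b i - g b i)"
      using assms(2,7) \<open>b \<in> S\<close> by (intro vnorm_proj_simplex_diff_le) auto
    also have "\<dots> < \<tau>"
      using fh[OF \<open>b \<in> S\<close>] vnorm_diff_commute[of N "fh b" "g b"] by linarith
    finally show ?thesis
      by simp
  qed
  with \<open>fh \<in> F n N c\<close> show thesis
    by (rule that)
qed

lemma norm_diff_sum_scaleR_le:
  fixes y :: "'a::real_normed_vector"
  assumes "g \<in> prob_simplex N"
    and "\<And>j. j < N \<Longrightarrow> g j \<noteq> 0 \<Longrightarrow> norm (y - w j) \<le> \<eta>"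
    and "\<And>j. j < N \<Longrightarrow> \<bar>p j - g j\<bar> \<le> \<tau>"
  shows "norm (y - (\<Sum>j<N. p j *\<^sub>R w j)) \<le> \<eta> + \<tau> * (\<Sum>j<N. norm (w j))"
proof -
  have g_sum: "(\<Sum>j<N. g j) = 1" and g_nonneg: "\<And>j. j < N \<Longrightarrow> 0 \<le> g j"
    using assms(1) by (auto simp: prob_simplex_def)
  have "(\<Sum>j<N. g j *\<^sub>R (y - w j)) + (\<Sum>j<N. (g j - p j) *\<^sub>R w j) = (\<Sum>j<N. g j *\<^sub>R y - p j *\<^sub>R w j)"
    by (simp add: algebra_simps flip: sum.distrib)
  also have "\<dots> = y - (\<Sum>j<N. p j *\<^sub>R w j)"
    by (simp add: sum_subtractf g_sum flip: scaleR_sum_left)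
  finally have decomp: "y - (\<Sum>j<N. p j *\<^sub>R w j)
      = (\<Sum>j<N. g j *\<^sub>R (y - w j)) + (\<Sum>j<N. (g j - p j) *\<^sub>R w j)" ..
  have "norm (\<Sum>j<N. g j *\<^sub>R (y - w j)) \<le> (\<Sum>j<N. g j * \<eta>)"
  proof (rule order_trans[OF norm_sum sum_mono])
    fix j
    assume "j \<in> {..<N}"
    then show "norm (g j *\<^sub>R (y - w j)) \<le> g j * \<eta>"
      using assms(2) g_nonneg by (cases "g j = 0") (auto intro: mult_left_mono)
  qed
  also have "\<dots> = \<eta>"
    by (simp add: g_sum flip: sum_distrib_right)
  finally have convex_part: "norm (\<Sum>j<N. g j *\<^sub>R (y - w j)) \<le> \<eta>" .
  have "norm (\<Sum>j<N. (g j - p j) *\<^sub>R w j) \<le> (\<Sum>j<N. \<tau> * norm (w j))"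
  proof (rule order_trans[OF norm_sum sum_mono])
    fix j
    assume "j \<in> {..<N}"
    then show "norm ((g j - p j) *\<^sub>R w j) \<le> \<tau> * norm (w j)"
      using assms(3)[of j] by (auto simp: abs_minus_commute intro: mult_right_mono)
  qed
  then have error_part: "norm (\<Sum>j<N. (g j - p j) *\<^sub>R w j) \<le> \<tau> * (\<Sum>j<N. norm (w j))"
    by (simp add: sum_distrib_left)
  show ?thesis
    unfolding decomp using norm_triangle_ineq convex_part error_part
    by (rule order_trans[OF _ add_mono])
qed

lemma universal_approximator_convex_combination:
  fixes E :: "'b \<Rightarrow> nat \<Rightarrow> real" and h :: "'b \<Rightarrow> 'a::real_normed_vector"
  assumes "universal_approximator F r" "0 < N" "0 < \<rho>" "0 < \<theta>"
    and "compact (E ` K)" "E ` K \<subseteq> vecs n"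
    and cover: "\<And>x. x \<in> K \<Longrightarrow> \<exists>j<N. vnorm n (\<lambda>k. E x k - a j k) < \<rho> / 2"
    and close: "\<And>x j. x \<in> K \<Longrightarrow> j < N \<Longrightarrow> vnorm n (\<lambda>k. E x k - a j k) < \<rho> \<Longrightarrow> norm (h x - w j) \<le> \<eta>"
  obtains c fh where "fh \<in> F n N c"
    "\<And>x. x \<in> K \<Longrightarrow> norm (h x - (\<Sum>j<N. proj_simplex N (fh (E x)) j *\<^sub>R w j)) \<le> \<eta> + \<theta>"
proof -
  define g where "g = tent_partition \<rho> n N a"
  define \<tau> where "\<tau> = \<theta> / (1 + (\<Sum>j<N. norm (w j)))"
  have "0 \<le> (\<Sum>j<N. norm (w j))"
    by (simp add: sum_nonneg)
  then have "0 < \<tau>" "\<tau> * (\<Sum>j<N. norm (w j)) \<le> \<theta>"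
    using assms(4) by (simp_all add: \<tau>_def field_simps)
  have g_simplex: "g (E x) \<in> prob_simplex N" if "x \<in> K" for x
  proof -
    obtain j where "j < N" "vnorm n (\<lambda>k. E x k - a j k) < \<rho> / 2"
      using cover[OF \<open>x \<in> K\<close>] by blast
    then show ?thesis
      unfolding g_def by (rule tent_partition_in_prob_simplex)
  qed
  obtain c fh where "fh \<in> F n N c"
    and fh: "\<And>b j. b \<in> E ` K \<Longrightarrow> j < N \<Longrightarrow> \<bar>proj_simplex N (fh b) j - g b j\<bar> \<le> \<tau>"
    by (rule universal_approximator_proj_simplex[OF assms(1,2) _ has_modulus_tent_partition[OF assms(3)]
          assms(5,6) _ \<open>0 < \<tau>\<close>])
      (use assms(3) g_simplex in \<open>auto simp: g_def\<close>)
  have "norm (h x - (\<Sum>j<N. proj_simplex N (fh (E x)) j *\<^sub>R w j)) \<le> \<eta> + \<theta>" if "x \<in> K" for x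
  proof -
    have "norm (h x - (\<Sum>j<N. proj_simplex N (fh (E x)) j *\<^sub>R w j)) \<le> \<eta> + \<tau> * (\<Sum>j<N. norm (w j))"
    proof (rule norm_diff_sum_scaleR_le)
      show "g (E x) \<in> prob_simplex N"
        using g_simplex \<open>x \<in> K\<close> .
      show "norm (h x - w j) \<le> \<eta>" if "j < N" "g (E x) j \<noteq> 0" for j
        using close \<open>x \<in> K\<close> that tent_partition_nonzero_imp_close unfolding g_def by blast
      show "\<bar>proj_simplex N (fh (E x)) j - g (E x) j\<bar> \<le> \<tau>" if "j < N" for j
        using fh \<open>x \<in> K\<close> that by blast
    qed
    with \<open>\<tau> * (\<Sum>j<N. norm (w j)) \<le> \<theta>\<close> show ?thesis
      by linarith
  qed
  with \<open>fh \<in> F n N c\<close> show thesis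
    by (rule that)
qed

lemma schauder_approximation_nonempty:
  fixes xb :: "nat \<Rightarrow> 'x::banach" and yb :: "nat \<Rightarrow> 'y::banach" and f :: "'x \<Rightarrow> 'y"
  assumes "schauder_basis xb" "schauder_basis yb" "universal_approximator F r"
    and "continuous_on K f" "compact K" "K \<noteq> {}" "0 < \<epsilon>"
  obtains n N Q c fh z where "0 < n" "0 < N" "0 < Q" "fh \<in> F n N c"
    "\<And>x. x \<in> K \<Longrightarrow> norm (f x - (\<Sum>j<N. \<Sum>i<Q.
        (proj_simplex N (fh (\<lambda>k. if k < n then schauder_coeff xb x k else 0)) j * z j i) *\<^sub>R yb i))
      \<le> 3 * \<epsilon> / 4"
proof -
  interpret X: schauder xb
    by (rule schauder.intro) (rule assms(1))
  interpret Y: schauder yb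
    by (rule schauder.intro) (rule assms(2))
  have "0 < \<epsilon> / 4"
    using assms(7) by simp
  then obtain n \<rho> and N :: nat and c where "0 < n" "0 < \<rho>" "0 < N" and c: "\<And>j. j < N \<Longrightarrow> c j \<in> K"
    and net: "\<And>x. x \<in> K \<Longrightarrow> \<exists>j<N. vnorm n (\<lambda>k. X.coords n x k - X.coords n (c j) k) < \<rho> / 2"
    and f_near: "\<And>x j. x \<in> K \<Longrightarrow> j < N \<Longrightarrow> vnorm n (\<lambda>k. X.coords n x k - X.coords n (c j) k) < \<rho> \<Longrightarrow>
      dist (f x) (f (c j)) < \<epsilon> / 4"
    by (rule X.compact_coords_net[OF assms(5,6,4)]) (rule that)
  have "compact ((f \<circ> c) ` {..<N})"
    by (intro finite_imp_compact finite_imageI) simp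
  then obtain Q0
    where Q0: "\<And>Q y. Q0 \<le> Q \<Longrightarrow> y \<in> (f \<circ> c) ` {..<N} \<Longrightarrow> norm (y - Y.partial_sum Q y) \<le> \<epsilon> / 4"
    using Y.partial_sum_uniform_convergence \<open>0 < \<epsilon> / 4\<close> by blast
  define Q where "Q = Suc Q0"
  define w where "w j = Y.partial_sum Q (f (c j))" for j
  have f_close: "norm (f x - w j) \<le> \<epsilon> / 2"
    if "x \<in> K" "j < N" "vnorm n (\<lambda>k. X.coords n x k - X.coords n (c j) k) < \<rho>" for x j
    using f_near[OF that] Q0[of Q "f (c j)"] \<open>j < N\<close>
      norm_triangle_ineq[of "f x - f (c j)" "f (c j) - w j"]
    by (simp add: Q_def w_def dist_norm)
  have coords_compact: "compact (X.coords n ` K)"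
    using assms(5)
    by (intro compact_continuous_image continuous_on_coordinatewise_then_product X.continuous_on_coords)
  have coords_vecs: "X.coords n ` K \<subseteq> vecs n"
    by (auto simp: X.coords_in_vecs)
  obtain cc fh where "fh \<in> F n N cc"
    and approx: "\<And>x. x \<in> K \<Longrightarrow> norm (f x - (\<Sum>j<N. proj_simplex N (fh (X.coords n x)) j *\<^sub>R w j))
      \<le> \<epsilon> / 2 + \<epsilon> / 4"
    by (rule universal_approximator_convex_combination[where K = K and E = "X.coords n"
          and a = "\<lambda>j. X.coords n (c j)" and h = f and w = w and \<rho> = \<rho> and \<eta> = "\<epsilon> / 2"])
      (rule assms(3) \<open>0 < N\<close> \<open>0 < \<rho>\<close> \<open>0 < \<epsilon> / 4\<close> coords_compact coords_vecs net f_close that; assumption?)+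
  have expansion: "(\<Sum>j<N. \<Sum>i<Q. (p j * schauder_coeff yb (f (c j)) i) *\<^sub>R yb i) = (\<Sum>j<N. p j *\<^sub>R w j)"
    for p :: "nat \<Rightarrow> real"
    by (simp add: w_def Y.partial_sum_def scaleR_sum_right)
  show thesis
  proof (rule that[of n N Q fh cc "\<lambda>j i. schauder_coeff yb (f (c j)) i"])
    show "0 < Q"
      by (simp add: Q_def)
    show "norm (f x - (\<Sum>j<N. \<Sum>i<Q. (proj_simplex N (fh (\<lambda>k. if k < n then schauder_coeff xb x k else 0)) j
        * schauder_coeff yb (f (c j)) i) *\<^sub>R yb i)) \<le> 3 * \<epsilon> / 4" if "x \<in> K" for x
      using approx[OF that] unfolding expansion by (simp add: X.coords_def)
  qed fact+
qed

theorem mainTheorem14: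
  fixes xb :: "nat \<Rightarrow> 'x::banach" and yb :: "nat \<Rightarrow> 'y::banach"
    and F :: "nat \<Rightarrow> nat \<Rightarrow> nat \<Rightarrow> ((nat \<Rightarrow> real) \<Rightarrow> (nat \<Rightarrow> real)) set"
    and r :: "(real \<Rightarrow> real) \<Rightarrow> (nat \<Rightarrow> real) set \<Rightarrow> nat \<Rightarrow> nat \<Rightarrow> nat \<Rightarrow> real"
    and f :: "'x \<Rightarrow> 'y" and \<epsilon> :: real and K :: "'x set"
  assumes "infinite_dimensional TYPE('x)" and "infinite_dimensional TYPE('y)"
    and "schauder_basis xb" and "schauder_basis yb"
    and "universal_approximator F r"
    and "continuous_on UNIV f" and "\<epsilon> > 0" and "compact K"
  shows "\<exists>n N Q. n \<ge> 1 \<and> N \<ge> 1 \<and> Q \<ge> 1 \<and>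
     (\<exists>fh \<in> (\<Union>c. F n N c). \<exists>z :: nat \<Rightarrow> nat \<Rightarrow> real.
       (\<exists>\<delta> < \<epsilon>. \<forall>x\<in>K.
          norm (f x - (\<Sum>j<N. \<Sum>i<Q.
             (proj_simplex N (fh (\<lambda>k. if k < n then schauder_coeff xb x k else 0)) j
               * z j i) *\<^sub>R yb i)) \<le> \<delta>))"
proof -
  \<comment> \<open>Enlarging \<open>K\<close> by a point keeps the net of centres nonempty even when \<open>K = {}\<close>.\<close>
  have "compact (insert 0 K)"
    using \<open>compact K\<close> by simp
  then obtain n N Q c fh z where "0 < n" "0 < N" "0 < Q" "fh \<in> F n N c"
    and approx: "\<And>x. x \<in> insert 0 K \<Longrightarrow> norm (f x - (\<Sum>j<N. \<Sum>i<Q.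
        (proj_simplex N (fh (\<lambda>k. if k < n then schauder_coeff xb x k else 0)) j * z j i) *\<^sub>R yb i))
      \<le> 3 * \<epsilon> / 4"
    by (rule schauder_approximation_nonempty[OF assms(3-5) continuous_on_subset[OF assms(6) subset_UNIV]
          _ insert_not_empty \<open>0 < \<epsilon>\<close>])
      (rule that)
  show ?thesis
  proof (intro exI conjI bexI)
    show "1 \<le> n" "1 \<le> N" "1 \<le> Q"
      using \<open>0 < n\<close> \<open>0 < N\<close> \<open>0 < Q\<close> by simp_all
    show "fh \<in> (\<Union>c. F n N c)"
      using \<open>fh \<in> F n N c\<close> by blast
    show "3 * \<epsilon> / 4 < \<epsilon>"
      using \<open>0 < \<epsilon>\<close> by simp
    show "\<forall>x\<in>K. norm (f x - (\<Sum>j<N. \<Sum>i<Q.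
        (proj_simplex N (fh (\<lambda>k. if k < n then schauder_coeff xb x k else 0)) j * z j i) *\<^sub>R yb i))
      \<le> 3 * \<epsilon> / 4"
      using approx by blast
  qed
qed

end
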